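(* Let $x,y,z,t$ be integers and put $n_1=2(xz+yt)$, $n_2=2(zt-xy)$, $n_3=x^2-y^2-z^2+t^2$. If $\gcd(n_1,n_2,n_3)=n>1$, then the quaternion $q=x+yi+zj+tk$ factors as $q=(x'+y'i+z'j+t'k)\,\eta$ with $x',y',z',t'\in\mathbb{Z}$ and $\eta\in\{1+i,\ 1+j,\ \alpha+\beta k\}$ for some integers $\alpha,\beta$ with $\alpha^2+\beta^2>1$.
   Context: Quaternions: $\mathbb{H}(\mathbb{R})$ is the real associative algebra with basis $1,i,j,k$ and $i^2=j^2=k^2=-1$, $ij=-ji=k$, $jk=-kj=i$, $ki=-ik=j$. Products are taken in this (noncommutative) algebra. *)

theory Defs
  imports Main "HOL.Real"
begin

text \<open>Real quaternions H(R): q = a + b i + c j + d k, represented by their four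
  real coordinates, with the Hamilton product (i^2=j^2=k^2=-1, ij=k, jk=i, ki=j).\<close>

datatype quat = Quat (re: real) (im_i: real) (im_j: real) (im_k: real)

fun qmult :: "quat \<Rightarrow> quat \<Rightarrow> quat" (infixl "\<otimes>\<^sub>H" 70) where
  "qmult (Quat a1 b1 c1 d1) (Quat a2 b2 c2 d2) =
     Quat (a1*a2 - b1*b2 - c1*c2 - d1*d2)
          (a1*b2 + b1*a2 + c1*d2 - d1*c2)
          (a1*c2 - b1*d2 + c1*a2 + d1*b2)
          (a1*d2 + b1*c2 - c1*b2 + d1*a2)"

definition iquat :: "int \<Rightarrow> int \<Rightarrow> int \<Rightarrow> int \<Rightarrow> quat" where
  "iquat x y z t = Quat (of_int x) (of_int y) (of_int z) (of_int t)"

end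

theory Submission
  imports Defs "HOL-Library.Product_Plus"
begin

text \<open>Write \<open>q = u + v j\<close> with \<open>u = x + t k\<close> and \<open>v = z - y k\<close> in the Gaussian
  integers \<open>\<int>[k]\<close>; right multiplication by \<open>\<alpha> + \<beta> k\<close> multiplies \<open>u\<close> by
  \<open>\<alpha> + \<beta> k\<close> and \<open>v\<close> by its conjugate. Up to the factor 2, the three numbers
  \<open>n\<^sub>1, n\<^sub>2, n\<^sub>3\<close> are the coordinates of \<open>u \<cdot> v\<close> and \<open>|u|\<^sup>2 - |v|\<^sup>2\<close>.
  If \<open>n\<close> is even, then \<open>x + y + z + t\<close> is even and one of \<open>1 + i\<close>, \<open>1 + j\<close>,
  \<open>1 + k\<close> is a right divisor of \<open>q\<close>. If \<open>n\<close> is odd, a generator \<open>\<eta>\<close> of the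
  ideal \<open>(u, conj v)\<close> of the principal ideal domain \<open>\<int>[k]\<close> is a common divisor, and
  the divisibility hypotheses prevent \<open>\<eta>\<close> from being a unit.\<close>

text \<open>Gaussian integers \<open>a + b k\<close> are encoded as pairs \<open>(a, b)\<close>, with the
  componentwise addition of \<open>Product_Plus\<close>.\<close>

definition gmult :: "int \<times> int \<Rightarrow> int \<times> int \<Rightarrow> int \<times> int" where
  "gmult u v = (fst u * fst v - snd u * snd v, fst u * snd v + snd u * fst v)"

definition gcnj :: "int \<times> int \<Rightarrow> int \<times> int" where
  "gcnj u = (fst u, - snd u)"

definition gnorm :: "int \<times> int \<Rightarrow> int" where
  "gnorm u = fst u ^ 2 + snd u ^ 2"

lemma gnorm_nonneg: "gnorm u \<ge> 0"
  by (simp add: gnorm_def)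

lemma gnorm_eq_0_iff: "gnorm u = 0 \<longleftrightarrow> u = 0"
  by (simp add: gnorm_def sum_power2_eq_zero_iff prod_eq_iff)

lemma gnorm_gmult: "gnorm (gmult u v) = gnorm u * gnorm v"
  by (simp add: gnorm_def gmult_def power2_eq_square algebra_simps)

lemma gnorm_gcnj: "gnorm (gcnj u) = gnorm u"
  by (simp add: gnorm_def gcnj_def)

lemma gnorm_add: "gnorm (u + v) = gnorm u + gnorm v + 2 * fst (gmult u (gcnj v))"
  by (simp add: gnorm_def gmult_def gcnj_def power2_eq_square algebra_simps)

lemma gmult_one_left: "gmult (1, 0) u = u"
  by (simp add: gmult_def)

lemma gmult_zero_left: "gmult 0 u = 0"
  by (simp add: gmult_def zero_prod_def)

lemma dvd_gmult_components:
  assumes "m dvd fst w" and "m dvd snd w"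
  shows "m dvd fst (gmult u w)" and "m dvd snd (gmult u w)"
  using assms by (simp_all add: gmult_def)

lemma nearest_multiple:
  fixes a m :: int
  assumes "m > 0"
  shows "\<exists>q. 4 * (a - q * m) ^ 2 \<le> m ^ 2"
proof -
  define q where "q = (2 * a + m) div (2 * m)"
  define r where "r = (2 * a + m) mod (2 * m)"
  have "0 \<le> r" "r < 2 * m"
    using assms by (simp_all add: r_def)
  moreover have "2 * (a - q * m) = r - m"
    using div_mult_mod_eq[of "2 * a + m" "2 * m"] by (simp add: q_def r_def algebra_simps)
  ultimately have "(2 * (a - q * m)) ^ 2 \<le> m ^ 2"
    by (simp add: abs_le_square_iff[symmetric])
  then show ?thesis
    by (metis power_mult_distrib numeral_Bit0_eq_double power2_eq_square mult_2)
qed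

text \<open>The quotient rounds the coordinates of \<open>w \<cdot> conj e / gnorm e\<close> to the
  nearest integers.\<close>
lemma gauss_division:
  assumes "e \<noteq> 0"
  shows "\<exists>q. gnorm (w - gmult q e) < gnorm e"
proof -
  define m where "m = gnorm e"
  define a where "a = gmult w (gcnj e)"
  have m: "m > 0"
    using assms gnorm_nonneg[of e] gnorm_eq_0_iff[of e] by (simp add: m_def)
  obtain q1 where q1: "4 * (fst a - q1 * m) ^ 2 \<le> m ^ 2"
    using nearest_multiple[OF m] by blast
  obtain q2 where q2: "4 * (snd a - q2 * m) ^ 2 \<le> m ^ 2"
    using nearest_multiple[OF m] by blast
  define q where "q = (q1, q2)"
  have "gmult (w - gmult q e) (gcnj e) = (fst a - q1 * m, snd a - q2 * m)"
    by (simp add: a_def m_def q_def gmult_def gcnj_def gnorm_def power2_eq_square algebra_simps)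
  then have "gnorm (w - gmult q e) * m = (fst a - q1 * m) ^ 2 + (snd a - q2 * m) ^ 2"
    by (metis gnorm_gmult gnorm_gcnj gnorm_def fst_conv snd_conv m_def)
  with q1 q2 have "2 * gnorm (w - gmult q e) * (2 * m) \<le> m * (2 * m)"
    by (simp add: power2_eq_square algebra_simps)
  then have "2 * gnorm (w - gmult q e) \<le> m"
    using m by (simp add: mult_le_cancel_right)
  then have "gnorm (w - gmult q e) < gnorm e"
    using m by (simp add: m_def)
  then show ?thesis ..
qed

text \<open>The ideal generated by \<open>u\<close> and \<open>v\<close> is generated by a nonzero element of
  least norm, since the remainder of any element of the ideal on division by it
  again lies in the ideal.\<close>
lemma gauss_ideal_principal:
  assumes "u \<noteq> 0 \<or> v \<noteq> 0"
  obtains e s r where "e = gmult s u + gmult r v" and "e \<noteq> 0"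
    and "\<exists>a. u = gmult a e" and "\<exists>c. v = gmult c e"
proof -
  define comb where "comb p = gmult (fst p) u + gmult (snd p) v" for p
  have "comb ((1, 0), 0) \<noteq> 0 \<or> comb (0, (1, 0)) \<noteq> 0"
    using assms by (simp add: comb_def gmult_one_left gmult_zero_left)
  then obtain p where p: "comb p \<noteq> 0"
    and least: "\<And>p'. comb p' \<noteq> 0 \<Longrightarrow> nat (gnorm (comb p)) \<le> nat (gnorm (comb p'))"
    using ex_has_least_nat[of "\<lambda>p. comb p \<noteq> 0" _ "\<lambda>p. nat (gnorm (comb p))"] by blast
  define e where "e = comb p"
  have multiple: "\<exists>a. comb p' = gmult a e" for p'
  proof -
    have "e \<noteq> 0"
      using p by (simp add: e_def)
    then obtain q where q: "gnorm (comb p' - gmult q e) < gnorm e"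
      using gauss_division by blast
    define p'' where "p'' = (fst p' - gmult q (fst p), snd p' - gmult q (snd p))"
    have remainder: "comb p' - gmult q e = comb p''"
      by (simp add: comb_def e_def p''_def gmult_def algebra_simps)
    have "comb p'' = 0"
    proof (rule ccontr)
      assume "comb p'' \<noteq> 0"
      then have "gnorm e \<le> gnorm (comb p'')"
        using least[of p''] gnorm_nonneg[of "comb p''"] by (simp add: e_def nat_le_eq_zle)
      then show False
        using q remainder by simp
    qed
    then show ?thesis
      using remainder by (metis eq_iff_diff_eq_0)
  qed
  show thesis
  proof
    show "e = gmult (fst p) u + gmult (snd p) v" "e \<noteq> 0"
      using p by (simp_all add: e_def comb_def)
    show "\<exists>a. u = gmult a e" "\<exists>c. v = gmult c e"
      using multiple[of "((1, 0), 0)"] multiple[of "(0, (1, 0))"]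
      by (simp_all add: comb_def gmult_one_left gmult_zero_left)
  qed
qed

text \<open>If \<open>m\<close> divides \<open>u \<cdot> conj v\<close> and \<open>gnorm u - gnorm v\<close>, then modulo \<open>m\<close> the
  norm of \<open>s u + r v\<close> is \<open>gnorm u \<cdot> (gnorm s + gnorm r)\<close>, so a combination of norm 1
  makes \<open>gnorm u\<close> invertible mod \<open>m\<close>; but \<open>m\<close> also divides
  \<open>conj u \<cdot> u \<cdot> conj v = gnorm u \<cdot> conj v\<close>, hence \<open>v\<close>, hence \<open>gnorm u\<close>.\<close>
lemma gauss_combination_norm_one_imp_unit:
  assumes uv1: "m dvd fst (gmult u (gcnj v))" and uv2: "m dvd snd (gmult u (gcnj v))"
    and norms: "m dvd gnorm u - gnorm v"
    and one: "gnorm (gmult s u + gmult r v) = 1"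
  shows "is_unit m"
proof -
  define c where "c = gmult u (gcnj v)"
  have "gmult (gmult s u) (gcnj (gmult r v)) = gmult (gmult s (gcnj r)) c"
    by (simp add: c_def gmult_def gcnj_def algebra_simps)
  then have "1 = gnorm s * gnorm u + gnorm r * gnorm v + 2 * fst (gmult (gmult s (gcnj r)) c)"
    using one by (simp add: gnorm_add gnorm_gmult)
  then have "gnorm u * (gnorm s + gnorm r) - 1 =
      gnorm r * (gnorm u - gnorm v) - 2 * fst (gmult (gmult s (gcnj r)) c)"
    by (simp add: algebra_simps)
  moreover have "m dvd fst (gmult (gmult s (gcnj r)) c)"
    using dvd_gmult_components uv1 uv2 by (simp add: c_def)
  ultimately have "m dvd gnorm u * (gnorm s + gnorm r) - 1"
    using norms by (metis dvd_diff dvd_mult dvd_mult2)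
  then have coprime: "coprime m (gnorm u)"
  proof (intro coprimeI)
    fix d
    assume "m dvd gnorm u * (gnorm s + gnorm r) - 1" "d dvd m" "d dvd gnorm u"
    then have "d dvd gnorm u * (gnorm s + gnorm r) - (gnorm u * (gnorm s + gnorm r) - 1)"
      by (meson dvd_diff dvd_mult2 dvd_trans)
    then show "is_unit d"
      by simp
  qed
  have "gmult (gcnj u) c = (gnorm u * fst v, - (gnorm u * snd v))"
    by (simp add: c_def gmult_def gcnj_def gnorm_def power2_eq_square algebra_simps)
  then have "m dvd gnorm u * fst v" "m dvd gnorm u * snd v"
    using dvd_gmult_components[of m c "gcnj u"] uv1 uv2 by (auto simp: c_def)
  then have "m dvd fst v" "m dvd snd v"
    using coprime coprime_dvd_mult_right_iff by blast+
  then have "m dvd gnorm v"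
    by (simp add: gnorm_def power2_eq_square)
  then have "m dvd gnorm u"
    using norms by (metis diff_add_cancel dvd_add)
  then show ?thesis
    using coprime by (meson coprime_common_divisor dvd_refl)
qed

lemma gauss_common_factor:
  assumes "m > 1"
    and "m dvd fst (gmult u (gcnj v))" and "m dvd snd (gmult u (gcnj v))"
    and "m dvd gnorm u - gnorm v"
    and "u \<noteq> 0 \<or> v \<noteq> 0"
  obtains e a c where "gnorm e > 1" and "u = gmult a e" and "v = gmult c e"
proof -
  obtain e s r where e: "e = gmult s u + gmult r v" "e \<noteq> 0"
    and multiples: "\<exists>a. u = gmult a e" "\<exists>c. v = gmult c e"
    using gauss_ideal_principal[OF assms(5)] by blast
  have "gnorm e \<noteq> 1"
    using gauss_combination_norm_one_imp_unit[OF assms(2-4), of s r] e(1) assms(1) by auto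
  moreover have "gnorm e > 0"
    using e gnorm_nonneg[of e] gnorm_eq_0_iff[of e] by linarith
  ultimately have "gnorm e > 1"
    by linarith
  then show thesis
    using that multiples by blast
qed

lemma iquat_right_factor_k:
  assumes "(x, t) = gmult a e" and "(z, y) = gmult c e"
  shows "iquat x y z t = iquat (fst a) (snd c) (fst c) (snd a) \<otimes>\<^sub>H iquat (fst e) 0 0 (snd e)"
proof -
  have coordinates: "x = fst a * fst e - snd a * snd e" "t = fst a * snd e + snd a * fst e"
    "z = fst c * fst e - snd c * snd e" "y = fst c * snd e + snd c * fst e"
    using assms unfolding gmult_def by (simp_all only: prod.inject)
  show ?thesis
    unfolding iquat_def coordinates by (simp add: algebra_simps)
qed

lemma iquat_right_factor_1_i:
  assumes "even (x + y)" and "even (z + t)"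
  shows "\<exists>x' y' z' t'. iquat x y z t = iquat x' y' z' t' \<otimes>\<^sub>H iquat 1 1 0 0"
proof -
  obtain a d where "y = 2 * a - x" and "t = 2 * d - z"
    using assms by (metis evenE add_diff_cancel_left')
  then have "iquat x y z t = iquat a (a - x) (z - d) d \<otimes>\<^sub>H iquat 1 1 0 0"
    unfolding iquat_def by (simp add: algebra_simps)
  then show ?thesis
    by blast
qed

lemma iquat_right_factor_1_j:
  assumes "even (x + z)" and "even (y + t)"
  shows "\<exists>x' y' z' t'. iquat x y z t = iquat x' y' z' t' \<otimes>\<^sub>H iquat 1 0 1 0"
proof -
  obtain a d where "z = 2 * a - x" and "t = 2 * d - y"
    using assms by (metis evenE add_diff_cancel_left')
  then have "iquat x y z t = iquat a d (a - x) (d - y) \<otimes>\<^sub>H iquat 1 0 1 0"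
    unfolding iquat_def by (simp add: algebra_simps)
  then show ?thesis
    by blast
qed

lemma iquat_right_factor_1_k:
  assumes "even (x + t)" and "even (y + z)"
  shows "\<exists>x' y' z' t'. iquat x y z t = iquat x' y' z' t' \<otimes>\<^sub>H iquat 1 0 0 1"
proof -
  obtain a d where "t = 2 * a - x" and "z = 2 * d - y"
    using assms by (metis evenE add_diff_cancel_left')
  then have "iquat x y z t = iquat a (y - d) d (a - x) \<otimes>\<^sub>H iquat 1 0 0 1"
    unfolding iquat_def by (simp add: algebra_simps)
  then show ?thesis
    by blast
qed

lemma iquat_right_factor_of_even_sum:
  assumes "even (x + y + z + t)"
  shows "\<exists>x' y' z' t' \<eta>. iquat x y z t = iquat x' y' z' t' \<otimes>\<^sub>H \<eta> \<and>
           (\<eta> = iquat 1 1 0 0 \<or> \<eta> = iquat 1 0 1 0 \<or> \<eta> = iquat 1 0 0 1)"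
proof -
  consider "even (x + y)" "even (z + t)" | "even (x + z)" "even (y + t)"
    | "even (x + t)" "even (y + z)"
    using assms by (auto simp: even_add)
  then show ?thesis
  proof cases
    case 1
    then show ?thesis
      using iquat_right_factor_1_i by blast
  next
    case 2
    then show ?thesis
      using iquat_right_factor_1_j by blast
  next
    case 3
    then show ?thesis
      using iquat_right_factor_1_k by blast
  qed
qed

lemma iquat_right_factor_k_of_dvd:
  fixes x y z t m :: int
  assumes "m > 1" and "m dvd x*z + y*t" and "m dvd z*t - x*y"
    and "m dvd x^2 - y^2 - z^2 + t^2" and "(x, y, z, t) \<noteq> (0, 0, 0, 0)"
  shows "\<exists>x' y' z' t' \<alpha> \<beta>. \<alpha>^2 + \<beta>^2 > 1 \<and> iquat x y z t = iquat x' y' z' t' \<otimes>\<^sub>H iquat \<alpha> 0 0 \<beta>"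
proof -
  have "gmult (x, t) (gcnj (z, y)) = (x*z + y*t, z*t - x*y)"
    by (simp add: gmult_def gcnj_def algebra_simps)
  then have "m dvd fst (gmult (x, t) (gcnj (z, y)))" "m dvd snd (gmult (x, t) (gcnj (z, y)))"
    using assms(2,3) by simp_all
  moreover have "m dvd gnorm (x, t) - gnorm (z, y)"
    using assms(4) by (simp add: gnorm_def algebra_simps)
  moreover have "(x, t) \<noteq> 0 \<or> (z, y) \<noteq> 0"
    using assms(5) by (auto simp: zero_prod_def)
  ultimately obtain e a c where "gnorm e > 1" "(x, t) = gmult a e" "(z, y) = gmult c e"
    using gauss_common_factor[OF assms(1)] by blast
  then show ?thesis
    using iquat_right_factor_k unfolding gnorm_def by blast
qed

theorem proposition2p9:
  fixes x y z t n :: int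
  assumes "n = gcd (2 * (x*z + y*t)) (gcd (2 * (z*t - x*y)) (x^2 - y^2 - z^2 + t^2))"
    and "n > 1"
  shows "\<exists>x' y' z' t' :: int. \<exists>\<eta> :: quat.
           iquat x y z t = iquat x' y' z' t' \<otimes>\<^sub>H \<eta> \<and>
           (\<eta> = iquat 1 1 0 0 \<or> \<eta> = iquat 1 0 1 0 \<or>
            (\<exists>\<alpha> \<beta> :: int. \<alpha>^2 + \<beta>^2 > 1 \<and> \<eta> = iquat \<alpha> 0 0 \<beta>))"
proof -
  have n1: "n dvd 2 * (x*z + y*t)" and n2: "n dvd 2 * (z*t - x*y)"
    and n3: "n dvd x^2 - y^2 - z^2 + t^2"
    using assms(1) by (metis gcd_dvd1 gcd_dvd2 dvd_trans)+
  show ?thesis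
  proof (cases "even n")
    case True
    have "even (x^2 - y^2 - z^2 + t^2)"
      using True n3 by (rule dvd_trans)
    then have "even (x + y + z + t)"
      by (simp add: power2_eq_square)
    moreover have "(1::int)^2 + 1^2 > 1"
      by simp
    ultimately show ?thesis
      using iquat_right_factor_of_even_sum by blast
  next
    case False
    then have "coprime n 2"
      by (simp add: coprime_commute)
    with n1 n2 have "n dvd x*z + y*t" "n dvd z*t - x*y"
      using coprime_dvd_mult_right_iff by blast+
    moreover have "(x, y, z, t) \<noteq> (0, 0, 0, 0)"
      using assms by auto
    ultimately show ?thesis
      using iquat_right_factor_k_of_dvd[OF assms(2) _ _ n3] by blast
  qed
qed

end
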